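(* Write $\mathbb{R}^4=\mathbb{R}^3\times\mathbb{R}$ and for $S\in SO(3)$ let $\Sigma_S$ be the linear map $(\mathbf{x},x^4)\mapsto(S\mathbf{x},x^4)$; let $SO_4(3)=\{\Sigma_S:S\in SO(3)\}$. An additive subgroup $\Lambda$ of $\mathbb{R}^4$ satisfies $\Sigma_S(\Lambda)\subseteq\Lambda$ for all $S\in SO(3)$ if and only if $\Lambda=\{\mathbf{0}\}\times H$ or $\Lambda=\mathbb{R}^3\times H$ for some additive subgroup $H$ of $\mathbb{R}$. *)

theory Defs
  imports "HOL-Analysis.Analysis"
begin

definition additive_subgroup :: "'a::ab_group_add set \<Rightarrow> bool" where
  "additive_subgroup L \<longleftrightarrow> 0 \<in> L \<and> (\<forall>x\<in>L. \<forall>y\<in>L. x + y \<in> L) \<and> (\<forall>x\<in>L. - x \<in> L)"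

definition SO3 :: "(real^3^3) set" where
  "SO3 = {S. orthogonal_matrix S \<and> det S = 1}"

definition Sigma :: "real^3^3 \<Rightarrow> ((real^3) \<times> real) \<Rightarrow> ((real^3) \<times> real)" where
  "Sigma S p = (S *v fst p, snd p)"

end

theory Submission
  imports Defs
begin

text \<open>
  If \<open>\<Lambda>\<close> contains a point \<open>(x, t)\<close> with \<open>x \<noteq> 0\<close>, rotating it gives every \<open>(a, t)\<close> with
  \<open>\<parallel>a\<parallel> = \<parallel>x\<parallel>\<close>. Every \<open>w\<close> with \<open>\<parallel>w\<parallel> \<le> 2\<parallel>x\<parallel>\<close> is a difference \<open>a - b\<close> of two such vectors,
  so \<open>(w, 0) \<in> \<Lambda>\<close> for a whole ball of \<open>w\<close>; integer multiples of that ball cover \<open>\<real>\<^sup>3\<close>, hence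
  \<open>\<Lambda> = \<real>\<^sup>3 \<times> H\<close>. Otherwise \<open>\<Lambda> \<subseteq> {0} \<times> \<real>\<close>. In both cases \<open>H\<close> is the projection of \<open>\<Lambda>\<close>
  to the last coordinate.
\<close>

lemma additive_subgroup_diff:
  assumes "additive_subgroup L" "x \<in> L" "y \<in> L"
  shows "x - y \<in> L"
  using assms unfolding additive_subgroup_def by (metis diff_conv_add_uminus)

lemma additive_subgroup_scaleR_of_nat:
  fixes x :: "'a::real_vector"
  assumes "additive_subgroup L" "x \<in> L"
  shows "of_nat n *\<^sub>R x \<in> L"
proof (induction n)
  case 0
  then show ?case using assms(1) unfolding additive_subgroup_def by simp
next
  case (Suc n)
  then have "of_nat n *\<^sub>R x + x \<in> L"
    using assms unfolding additive_subgroup_def by blast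
  then show ?case by (simp add: algebra_simps)
qed

lemma additive_subgroup_snd_image:
  assumes "additive_subgroup L"
  shows "additive_subgroup (snd ` L)"
  unfolding additive_subgroup_def
proof (intro conjI ballI)
  show "0 \<in> snd ` L"
    using assms unfolding additive_subgroup_def by (metis image_eqI snd_zero)
next
  fix x y assume "x \<in> snd ` L" "y \<in> snd ` L"
  then obtain p q where "p \<in> L" "q \<in> L" "x = snd p" "y = snd q" by blast
  then show "x + y \<in> snd ` L"
    using assms unfolding additive_subgroup_def by (metis image_eqI snd_add)
next
  fix x assume "x \<in> snd ` L"
  then obtain p where "p \<in> L" "x = snd p" by blast
  then show "- x \<in> snd ` L"
    using assms unfolding additive_subgroup_def by (metis image_eqI snd_uminus)
qed

lemma additive_subgroup_fst_slice:
  assumes "additive_subgroup L"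
  shows "additive_subgroup {x. (x, 0) \<in> L}"
  using assms unfolding additive_subgroup_def
  by (metis (mono_tags, lifting) add.right_neutral add_Pair mem_Collect_eq neg_equal_0_iff_equal
      uminus_Pair zero_prod_def)

lemma additive_subgroup_containing_ball_eq_UNIV:
  fixes L :: "'a::real_normed_vector set"
  assumes L: "additive_subgroup L" and "r > 0" and ball: "\<And>w. norm w \<le> r \<Longrightarrow> w \<in> L"
  shows "L = UNIV"
proof -
  have "w \<in> L" for w
  proof -
    obtain n :: nat where n: "norm w / r < of_nat n" using reals_Archimedean2 by blast
    then have "0 < real n" by (smt (verit) \<open>r > 0\<close> divide_nonneg_pos norm_ge_zero)
    moreover have "norm (inverse (real n) *\<^sub>R w) \<le> r"
      using n \<open>r > 0\<close> \<open>0 < real n\<close> by (simp add: field_simps)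
    ultimately have "real n *\<^sub>R (inverse (real n) *\<^sub>R w) \<in> L"
      using ball additive_subgroup_scaleR_of_nat[OF L] by blast
    then show ?thesis using \<open>0 < real n\<close> by simp
  qed
  then show ?thesis by blast
qed

lemma Times_snd_image_eq_if_slice_UNIV:
  fixes L :: "('a::ab_group_add \<times> 'b::ab_group_add) set"
  assumes "additive_subgroup L" and "\<And>w. (w, 0) \<in> L"
  shows "L = UNIV \<times> snd ` L"
proof (intro set_eqI iffI)
  fix p :: "'a \<times> 'b" assume "p \<in> UNIV \<times> snd ` L"
  then obtain q where q: "q \<in> L" "snd p = snd q" by auto
  have "(fst p - fst q, 0) + q \<in> L"
    using assms q(1) unfolding additive_subgroup_def by blast
  moreover have "(fst p - fst q, 0) + q = p" using q(2) by (simp add: prod_eq_iff)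
  ultimately show "p \<in> L" by simp
qed force

lemma Times_snd_image_eq_if_fst_zero:
  assumes "\<And>p. p \<in> L \<Longrightarrow> fst p = 0"
  shows "L = {0} \<times> snd ` L"
  using assms by (force simp: prod_eq_iff)

lemma SO3_transitive_on_spheres:
  fixes a b :: "real^3"
  assumes "norm a = norm b"
  shows "\<exists>S\<in>SO3. S *v a = b"
proof -
  obtain f where f: "orthogonal_transformation f" "det (matrix f) = 1" "f a = b"
    using rotation_exists[of a b] assms by auto
  then have "matrix f *v a = b"
    by (simp add: orthogonal_transformation_linear matrix_works)
  moreover have "matrix f \<in> SO3"
    using f(1,2) unfolding SO3_def orthogonal_transformation_matrix by simp
  ultimately show ?thesis by blast
qed

text \<open>The two vectors are \<open>w/2 \<pm> p\<close> with \<open>p \<bottom> w\<close> of length \<open>\<surd>(r\<^sup>2 - \<parallel>w\<parallel>\<^sup>2/4)\<close>.\<close>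

lemma diff_of_vectors_on_sphere:
  fixes w :: "'a::euclidean_space"
  assumes "2 \<le> DIM('a)" "r \<ge> 0" "norm w \<le> 2 * r"
  obtains a b where "norm a = r" "norm b = r" "a - b = w"
proof -
  obtain y where y: "y \<noteq> 0" "orthogonal w y"
    using orthogonal_to_vector_exists assms(1) by blast
  define p where "p = (sqrt (r\<^sup>2 - (norm w)\<^sup>2 / 4) / norm y) *\<^sub>R y"
  have wp: "w \<bullet> p = 0" using y(2) unfolding p_def orthogonal_def by simp
  have "(norm w)\<^sup>2 \<le> (2 * r)\<^sup>2" by (rule power_mono[OF assms(3) norm_ge_zero])
  then have pp: "p \<bullet> p = r\<^sup>2 - (norm w)\<^sup>2 / 4"
    using y(1) by (simp add: p_def dot_square_norm power_divide)
  have ww: "w \<bullet> w = (norm w)\<^sup>2" by (simp add: power2_norm_eq_inner)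
  have "((1/2) *\<^sub>R w + p) \<bullet> ((1/2) *\<^sub>R w + p) = r\<^sup>2"
       "(p - (1/2) *\<^sub>R w) \<bullet> (p - (1/2) *\<^sub>R w) = r\<^sup>2"
    using wp pp ww by (simp_all add: inner_add_left inner_add_right inner_diff_left
        inner_diff_right inner_commute algebra_simps)
  then have "norm ((1/2) *\<^sub>R w + p) = r" "norm (p - (1/2) *\<^sub>R w) = r"
    using assms(2) by (simp_all add: norm_eq_sqrt_inner)
  moreover have "((1/2) *\<^sub>R w + p) - (p - (1/2) *\<^sub>R w) = w"
    by (simp add: scaleR_left_distrib[symmetric])
  ultimately show ?thesis using that by blast
qed

lemma Sigma_invariant_slice_contains_ball:
  assumes L: "additive_subgroup L" and inv: "\<forall>S\<in>SO3. Sigma S ` L \<subseteq> L"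
    and xt: "(x, t) \<in> L" and w: "norm w \<le> 2 * norm x"
  shows "(w, 0) \<in> L"
proof -
  have sphere: "(a, t) \<in> L" if a: "norm a = norm x" for a
  proof -
    obtain S where "S \<in> SO3" "S *v x = a"
      using SO3_transitive_on_spheres[of x a] a by auto
    then have "Sigma S (x, t) \<in> L" using inv xt by blast
    then show ?thesis using \<open>S *v x = a\<close> by (simp add: Sigma_def)
  qed
  obtain a b where "norm a = norm x" "norm b = norm x" "a - b = w"
    using diff_of_vectors_on_sphere[of "norm x" w] w by auto
  then have "(a, t) - (b, t) = (w, 0)" "(a, t) \<in> L" "(b, t) \<in> L"
    using sphere by auto
  then show ?thesis using additive_subgroup_diff[OF L] by metis
qed

lemma Sigma_image_Times:
  "Sigma S ` ({0} \<times> H) \<subseteq> {0} \<times> H" "Sigma S ` (UNIV \<times> H) \<subseteq> UNIV \<times> H"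
  by (auto simp: Sigma_def matrix_vector_mult_0_right)

theorem proposition3p2:
  fixes \<Lambda> :: "((real^3) \<times> real) set"
  assumes "additive_subgroup \<Lambda>"
  shows "(\<forall>S\<in>SO3. Sigma S ` \<Lambda> \<subseteq> \<Lambda>) \<longleftrightarrow>
         (\<exists>H :: real set. additive_subgroup H \<and>
            (\<Lambda> = {0} \<times> H \<or> \<Lambda> = UNIV \<times> H))"
proof
  assume inv: "\<forall>S\<in>SO3. Sigma S ` \<Lambda> \<subseteq> \<Lambda>"
  have "\<Lambda> = {0} \<times> snd ` \<Lambda> \<or> \<Lambda> = UNIV \<times> snd ` \<Lambda>"
  proof (cases "\<exists>x t. (x, t) \<in> \<Lambda> \<and> x \<noteq> 0")
    case True
    then obtain x t where "(x, t) \<in> \<Lambda>" "x \<noteq> 0" by blast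
    then have "{w. (w, 0) \<in> \<Lambda>} = UNIV"
      by (intro additive_subgroup_containing_ball_eq_UNIV[of _ "2 * norm x"]
          additive_subgroup_fst_slice[OF assms])
        (auto intro: Sigma_invariant_slice_contains_ball[OF assms inv])
    then show ?thesis using Times_snd_image_eq_if_slice_UNIV[OF assms] by blast
  next
    case False
    then show ?thesis using Times_snd_image_eq_if_fst_zero[of \<Lambda>] by (metis prod.collapse)
  qed
  then show "\<exists>H. additive_subgroup H \<and> (\<Lambda> = {0} \<times> H \<or> \<Lambda> = UNIV \<times> H)"
    using additive_subgroup_snd_image[OF assms] by blast
next
  assume "\<exists>H. additive_subgroup H \<and> (\<Lambda> = {0} \<times> H \<or> \<Lambda> = UNIV \<times> H)"
  then obtain H where "\<Lambda> = {0} \<times> H \<or> \<Lambda> = UNIV \<times> H" by blast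
  then show "\<forall>S\<in>SO3. Sigma S ` \<Lambda> \<subseteq> \<Lambda>"
    using Sigma_image_Times by blast
qed

end
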